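(* Let $\ell$ be an odd prime and fix $t\in\mathbb{Z}$. For $m\in\mathbb{Z}_{\ge1}$ define \[ \widetilde{\psi}_t^{(\ell)}(m) := \frac{1}{\varphi(m^2)} \sum_{\substack{n \bmod m^2\\ (n,m)=1}} \psi_{t^2 - 4\ell n}(m). \] Then the function $m\mapsto \widetilde{\psi}_t^{(\ell)}(m)$ is multiplicative.
   Context: For an integer $D=dL^2$ with $d$ a fundamental discriminant and $L\in\mathbb{Z}_{\ge0}$, $\psi_D(m):=\big(\tfrac{d}{m/(m,L)}\big)$ is a Kronecker symbol, with the convention $\psi_0(m)=1$. Here $\varphi$ is Euler's totient function, and the sum runs over residue classes $n$ modulo $m^2$ coprime to $m$. *)

theory Defs
  imports "HOL-Number_Theory.Number_Theory" "HOL-Computational_Algebra.Squarefree"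
begin

definition fund_disc :: "int \<Rightarrow> bool" where
  "fund_disc d \<longleftrightarrow>
     (d mod 4 = 1 \<and> squarefree d) \<or>
     (\<exists>k. d = 4 * k \<and> (k mod 4 = 2 \<or> k mod 4 = 3) \<and> squarefree k)"

definition kron_prime :: "int \<Rightarrow> nat \<Rightarrow> int" where
  "kron_prime a p =
     (if p = 2 then (if even a then 0 else if a mod 8 = 1 \<or> a mod 8 = 7 then 1 else -1)
      else Legendre a (int p))"

definition kronecker :: "int \<Rightarrow> nat \<Rightarrow> int" where
  "kronecker a m = (\<Prod>p\<in>prime_factors m. kron_prime a p ^ multiplicity p m)"

definition psi :: "int \<Rightarrow> nat \<Rightarrow> int" where
  "psi D m = (if D = 0 then 1 else
     (let (d, L) = (THE (d, L). fund_disc d \<and> L \<ge> 0 \<and> D = d * L ^ 2)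
      in kronecker d (m div gcd m (nat L))))"

definition psi_tilde :: "nat \<Rightarrow> int \<Rightarrow> nat \<Rightarrow> real" where
  "psi_tilde l t m =
     (\<Sum>n \<in> {n \<in> {0..<m^2}. coprime n m}. real_of_int (psi (t^2 - 4 * int l * int n) m))
       / real (totient (m^2))"

end

theory Submission
  imports Defs
begin

text \<open>
  For a discriminant D = d L^2 (d fundamental) and a prime power p^k, psi_D(p^k) equals
  (d/p)^(k - v_p(L)) with truncated subtraction, so psi_D(m) is multiplicative in m. Moreover
  psi_D(p^k) only depends on D mod 4 p^(2k): below that modulus the congruence pins down
  v_p(L) (when v_p(L) < k) and the class of d mod p, resp. mod 8 for p = 2. Since
  t^2 - 4 l n mod 4 m^2 only depends on n mod m^2, the Chinese remainder bijection between the
  units mod (ab)^2 and pairs of units mod a^2 and b^2 splits the numerator of psi_tilde(ab),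
  and the totient splits the denominator.
\<close>

lemma odd_square_mod_8: "odd (x :: int) \<Longrightarrow> x ^ 2 mod 8 = 1"
proof -
  assume "odd x"
  then have "x mod 8 = 1 \<or> x mod 8 = 3 \<or> x mod 8 = 5 \<or> x mod 8 = 7" by presburger
  moreover have "x ^ 2 mod 8 = (x mod 8) ^ 2 mod 8" by (simp add: power_mod)
  ultimately show ?thesis by auto
qed

lemma fund_discE:
  assumes "fund_disc d"
  obtains "d mod 4 = 1" "squarefree d"
        | k where "d = 4 * k" "k mod 4 = 2 \<or> k mod 4 = 3" "squarefree k"
  using assms unfolding fund_disc_def by blast

lemma squarefree_imp_not_4_dvd: "squarefree (k :: int) \<Longrightarrow> \<not> 4 dvd k"
  using squarefreeD[of k 2] by auto

lemma fund_disc_not_4_times: "fund_disc d \<Longrightarrow> \<not> fund_disc (4 * d)"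
  unfolding fund_disc_def by auto

lemma square_dvd_fund_disc:
  assumes "fund_disc d" "u > 0" "u ^ 2 dvd d"
  shows "u = 1 \<or> u = 2"
  using assms(1)
proof (cases rule: fund_discE)
  case 1
  then show ?thesis using assms(2,3) squarefreeD[of d u] by auto
next
  case (2 k)
  show ?thesis
  proof (cases "even u")
    case False
    then have "coprime (u ^ 2) (2 ^ 2)"
      by (simp only: coprime_power_left_iff coprime_power_right_iff) simp
    then have "u ^ 2 dvd k" using assms(3) 2(1) by (simp add: coprime_dvd_mult_right_iff)
    then show ?thesis using assms(2) 2(3) squarefreeD[of k u] by auto
  next
    case True
    then obtain w where w: "u = 2 * w" by blast
    then have "w ^ 2 dvd k" using assms(3) 2(1) by (simp add: power_mult_distrib)
    then show ?thesis using assms(2) 2(3) squarefreeD[of k w] w by auto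
  qed
qed

lemma odd_prime_square_not_dvd_fund_disc:
  assumes "fund_disc d" "prime (p :: int)" "odd p"
  shows "\<not> p ^ 2 dvd d"
  using square_dvd_fund_disc[OF assms(1) prime_gt_0_int[OF assms(2)]] assms(2,3) by auto

lemma fund_disc_factorization_unique:
  assumes "fund_disc d" "fund_disc d'" "L > 0" "L' > 0" "d * L ^ 2 = d' * L' ^ 2"
  shows "d = d' \<and> L = L'"
proof -
  define g where "g = gcd L L'"
  have "g > 0" using assms(3) by (simp add: g_def)
  obtain u u' where u: "L = u * g" "L' = u' * g" "coprime u u'"
    using gcd_coprime_exists[of L L'] \<open>g > 0\<close> unfolding g_def by auto
  have "u > 0" "u' > 0" using u assms(3,4) \<open>g > 0\<close> by (auto simp: zero_less_mult_iff)
  have "g ^ 2 * (d * u ^ 2) = g ^ 2 * (d' * u' ^ 2)"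
    using assms(5) u by (simp add: power_mult_distrib mult_ac)
  then have eq: "d * u ^ 2 = d' * u' ^ 2" using \<open>g > 0\<close> by simp
  have "u ^ 2 dvd d'"
    using eq u(3) by (metis coprime_dvd_mult_left_iff coprime_power_left_iff
        coprime_power_right_iff dvd_triv_right)
  then have u12: "u = 1 \<or> u = 2" using square_dvd_fund_disc assms(2) \<open>u > 0\<close> by blast
  have "u' ^ 2 dvd d"
    using eq u(3) by (metis coprime_commute coprime_dvd_mult_left_iff coprime_power_left_iff
        coprime_power_right_iff dvd_triv_right)
  then have u12': "u' = 1 \<or> u' = 2" using square_dvd_fund_disc assms(1) \<open>u' > 0\<close> by blast
  have "\<not> (u = 2 \<and> u' = 2)" using \<open>coprime u u'\<close> by auto
  moreover have "d' \<noteq> 4 * d" "d \<noteq> 4 * d'" using fund_disc_not_4_times assms(1,2) by auto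
  ultimately have "u = 1 \<and> u' = 1" using u12 u12' eq by auto
  then show ?thesis using eq \<open>L = u * g\<close> \<open>L' = u' * g\<close> by simp
qed

definition is_discriminant :: "int \<Rightarrow> bool" where
  "is_discriminant D \<longleftrightarrow> D mod 4 = 0 \<or> D mod 4 = 1"

lemma is_discriminant_square_minus_4_mult: "is_discriminant (t ^ 2 - 4 * a * b)"
proof -
  have "t ^ 2 mod 4 = 0 \<or> t ^ 2 mod 4 = 1"
  proof (cases "even t")
    case True
    then obtain s where "t = 2 * s" by blast
    then have "t ^ 2 = 4 * s ^ 2" by (simp add: power2_eq_square)
    then show ?thesis by simp
  next
    case False
    then have "t ^ 2 mod 8 = 1" by (rule odd_square_mod_8)
    then show ?thesis using mod_mod_cancel[of 4 8 "t ^ 2"] by simp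
  qed
  moreover have "(t ^ 2 - 4 * a * b) mod 4 = t ^ 2 mod 4" by (simp add: mod_diff_eq[symmetric])
  ultimately show ?thesis unfolding is_discriminant_def by simp
qed

lemma discriminant_fund_disc_factorization:
  assumes "is_discriminant D" "D \<noteq> 0"
  obtains d L where "fund_disc d" "L > 0" "D = d * L ^ 2"
proof -
  define s where "s = squarefree_part D"
  define q where "q = square_part D"
  have D: "D = s * q ^ 2" unfolding s_def q_def by (rule squarefree_decompose)
  have "squarefree s" unfolding s_def by simp
  have "q \<noteq> 0" using D assms(2) by auto
  show ?thesis
  proof (cases "s mod 4 = 1")
    case True
    then have "fund_disc s" using \<open>squarefree s\<close> unfolding fund_disc_def by auto
    then show ?thesis using that[of s "\<bar>q\<bar>"] D \<open>q \<noteq> 0\<close> by simp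
  next
    case False
    then have s: "s mod 4 = 2 \<or> s mod 4 = 3"
      using squarefree_imp_not_4_dvd[OF \<open>squarefree s\<close>] by presburger
    have "even q"
    proof (rule ccontr)
      assume "odd q"
      then have "q ^ 2 mod 8 = 1" by (rule odd_square_mod_8)
      then have "q ^ 2 mod 4 = 1" by presburger
      then have "D mod 4 = s mod 4" using D by (metis mod_mult_right_eq mult.right_neutral)
      then show False using s assms(1) unfolding is_discriminant_def by auto
    qed
    then obtain r where "q = 2 * r" by blast
    moreover have "fund_disc (4 * s)" using s \<open>squarefree s\<close> unfolding fund_disc_def by auto
    ultimately show ?thesis
      using that[of "4 * s" "\<bar>r\<bar>"] D \<open>q \<noteq> 0\<close> by (simp add: power_mult_distrib)
  qed
qed

lemma psi_eq_kronecker: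
  assumes "fund_disc d" "L > 0" "D = d * L ^ 2"
  shows "psi D m = kronecker d (m div gcd m (nat L))"
proof -
  have "D \<noteq> 0" using assms unfolding fund_disc_def by auto
  have "(THE (d, L). fund_disc d \<and> L \<ge> 0 \<and> D = d * L ^ 2) = (d, L)"
  proof (rule the_equality)
    fix x assume x: "case x of (d', L') \<Rightarrow> fund_disc d' \<and> L' \<ge> 0 \<and> D = d' * L' ^ 2"
    then obtain d' L' where "x = (d', L')" "fund_disc d'" "L' > 0" "D = d' * L' ^ 2"
      using \<open>D \<noteq> 0\<close> by (cases x) (auto simp: order_le_less)
    then show "x = (d, L)" using fund_disc_factorization_unique[of d d' L L'] assms by auto
  qed (use assms in auto)
  then show ?thesis unfolding psi_def using \<open>D \<noteq> 0\<close> by simp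
qed

lemma psi_eq_prod_kron_prime:
  assumes "fund_disc d" "L > 0" "D = d * L ^ 2" "m > 0"
  shows "psi D m =
    (\<Prod>p\<in>prime_factors m. kron_prime d p ^ (multiplicity p m - multiplicity p (nat L)))"
proof -
  define g where "g = gcd m (nat L)"
  define n where "n = m div g"
  have "m = g * n" unfolding n_def g_def by simp
  then have "g \<noteq> 0" "n \<noteq> 0" using assms(4) by auto
  have mult_n: "multiplicity p n = multiplicity p m - multiplicity p (nat L)" if "prime p" for p
  proof -
    have "multiplicity p g = min (multiplicity p m) (multiplicity p (nat L))"
      unfolding g_def using multiplicity_gcd[OF _ _ that] assms(2,4) by simp
    moreover have "multiplicity p m = multiplicity p g + multiplicity p n"
      using \<open>m = g * n\<close> \<open>g \<noteq> 0\<close> \<open>n \<noteq> 0\<close> that by (simp add: prime_elem_multiplicity_mult_distrib)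
    ultimately show ?thesis by simp
  qed
  have "psi D m = (\<Prod>p\<in>prime_factors n. kron_prime d p ^ multiplicity p n)"
    using psi_eq_kronecker[OF assms(1-3)] by (simp add: kronecker_def n_def g_def)
  also have "\<dots> = (\<Prod>p\<in>prime_factors m. kron_prime d p ^ multiplicity p n)"
  proof (rule prod.mono_neutral_left)
    show "prime_factors n \<subseteq> prime_factors m"
      using \<open>m = g * n\<close> \<open>g \<noteq> 0\<close> \<open>n \<noteq> 0\<close> by (simp add: prime_factors_product)
  qed (use \<open>n \<noteq> 0\<close> in \<open>auto simp: in_prime_factors_iff not_dvd_imp_multiplicity_0\<close>)
  also have "\<dots> = (\<Prod>p\<in>prime_factors m. kron_prime d p ^ (multiplicity p m - multiplicity p (nat L)))"
    using mult_n by (intro prod.cong) (auto simp: in_prime_factors_iff)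
  finally show ?thesis .
qed

lemma psi_prime_power:
  assumes "fund_disc d" "L > 0" "D = d * L ^ 2" "prime p"
  shows "psi D (p ^ k) = kron_prime d p ^ (k - multiplicity p (nat L))"
proof (cases "k = 0")
  case True
  then show ?thesis using psi_eq_kronecker[OF assms(1-3)] by (simp add: kronecker_def)
next
  case False
  then show ?thesis using psi_eq_prod_kron_prime[OF assms(1-3), of "p ^ k"] assms(4)
    by (simp add: prime_factors_power prime_prime_factors prime_gt_0_nat)
qed

lemma psi_0 [simp]: "psi 0 m = 1"
  by (simp add: psi_def)

lemma psi_eq_prod_prime_powers:
  assumes "is_discriminant D" "m > 0"
  shows "psi D m = (\<Prod>p\<in>prime_factors m. psi D (p ^ multiplicity p m))"
proof (cases "D = 0")
  case False
  then obtain d L where dL: "fund_disc d" "L > 0" "D = d * L ^ 2"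
    using discriminant_fund_disc_factorization assms(1) by blast
  show ?thesis
    unfolding psi_eq_prod_kron_prime[OF dL assms(2)]
    using psi_prime_power[OF dL] by (intro prod.cong) (auto simp: in_prime_factors_iff)
qed simp

lemma multiplicity_mult_coprime:
  fixes a b :: nat
  assumes "coprime a b" "a > 0" "b > 0" "p \<in> prime_factors a"
  shows "multiplicity p (a * b) = multiplicity p a"
proof -
  have "prime p" "p dvd a" using assms(4) by auto
  then have "\<not> p dvd b" using assms(1) coprime_common_divisor_nat not_prime_1 by blast
  then show ?thesis
    using \<open>prime p\<close> assms(2,3)
    by (simp add: prime_elem_multiplicity_mult_distrib not_dvd_imp_multiplicity_0)
qed

lemma psi_mult_coprime:
  assumes "is_discriminant D" "a > 0" "b > 0" "coprime a b"
  shows "psi D (a * b) = psi D a * psi D b"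
proof -
  have disj: "prime_factors a \<inter> prime_factors b = {}"
    using assms(4) by (auto simp: in_prime_factors_iff dest: coprime_common_divisor_nat)
  have mult_a: "multiplicity p (a * b) = multiplicity p a" if "p \<in> prime_factors a" for p
    using multiplicity_mult_coprime assms(2-4) that by blast
  have mult_b: "multiplicity p (a * b) = multiplicity p b" if "p \<in> prime_factors b" for p
    using multiplicity_mult_coprime[of b a p] assms(2-4) that
    by (simp add: coprime_commute mult.commute)
  have "psi D (a * b) =
      (\<Prod>p\<in>prime_factors a \<union> prime_factors b. psi D (p ^ multiplicity p (a * b)))"
    using psi_eq_prod_prime_powers[OF assms(1), of "a * b"] assms(2,3)
    by (simp add: prime_factors_product)
  also have "\<dots> = (\<Prod>p\<in>prime_factors a. psi D (p ^ multiplicity p (a * b))) *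
                  (\<Prod>p\<in>prime_factors b. psi D (p ^ multiplicity p (a * b)))"
    using disj by (intro prod.union_disjoint) auto
  also have "\<dots> = psi D a * psi D b"
    using psi_eq_prod_prime_powers[OF assms(1)] assms(2,3)
    by (simp add: mult_a mult_b cong: prod.cong)
  finally show ?thesis .
qed

lemma power_dvd_power_mult_imp_le:
  fixes q Y :: int
  assumes "q \<noteq> 0" "\<not> q dvd Y" "q ^ j dvd q ^ w * Y"
  shows "j \<le> w"
proof (rule ccontr)
  assume "\<not> j \<le> w"
  then have "q ^ Suc w dvd q ^ j" by (intro le_imp_power_dvd) simp
  then have "q ^ w * q dvd q ^ j" by (simp only: power_Suc2)
  then have "q ^ w * q dvd q ^ w * Y" using assms(3) by (rule dvd_trans)
  then show False using assms(1,2) by simp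
qed

lemma cong_power_mult_imp_eq:
  fixes q Y Y' :: int
  assumes "q \<noteq> 0" "\<not> q dvd Y" "\<not> q dvd Y'"
    and "[q ^ w * Y = q ^ w' * Y'] (mod q ^ N)" "w < N"
  shows "w = w'" "[Y = Y'] (mod q ^ (N - w))"
proof -
  have dvd_iff: "q ^ j dvd q ^ w * Y \<longleftrightarrow> q ^ j dvd q ^ w' * Y'" if "j \<le> N" for j
    using cong_dvd_iff[OF cong_dvd_modulus[OF assms(4)]] that by (simp add: le_imp_power_dvd)
  have "w \<le> w'"
    using dvd_iff[of w] assms(5) power_dvd_power_mult_imp_le[OF assms(1,3)] by simp
  moreover have "\<not> w + 1 \<le> w'"
  proof
    assume "w + 1 \<le> w'"
    then have "q ^ (w + 1) dvd q ^ w' * Y'" by (intro dvd_mult2 le_imp_power_dvd)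
    then have "q ^ (w + 1) dvd q ^ w * Y" using dvd_iff[of "w + 1"] assms(5) by simp
    then show False using power_dvd_power_mult_imp_le[OF assms(1,2)] by fastforce
  qed
  ultimately show "w = w'" by simp
  have "q ^ w * q ^ (N - w) dvd q ^ w * (Y - Y')"
    using assms(4,5) \<open>w = w'\<close> by (simp add: cong_iff_dvd_diff algebra_simps flip: power_add)
  then show "[Y = Y'] (mod q ^ (N - w))" using assms(1) by (simp add: cong_iff_dvd_diff)
qed

lemma Legendre_cong:
  assumes "[a = b] (mod p)"
  shows "Legendre a p = Legendre b p"
proof -
  have "[a = 0] (mod p) \<longleftrightarrow> [b = 0] (mod p)" "QuadRes p a \<longleftrightarrow> QuadRes p b"
    using assms unfolding QuadRes_def by (meson cong_sym cong_trans)+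
  then show ?thesis unfolding Legendre_def by simp
qed

lemma Legendre_mult_square:
  assumes "prime (p :: int)" "\<not> p dvd M"
  shows "Legendre (a * M ^ 2) p = Legendre a p"
proof -
  have "coprime p M" using assms prime_imp_coprime by blast
  then have "[a * M ^ 2 = 0] (mod p) \<longleftrightarrow> [a = 0] (mod p)"
    by (simp add: cong_0_iff coprime_dvd_mult_left_iff)
  moreover have "QuadRes p (a * M ^ 2) \<longleftrightarrow> QuadRes p a"
  proof
    assume "QuadRes p a"
    then obtain y where "[y ^ 2 = a] (mod p)" unfolding QuadRes_def by blast
    then have "[(y * M) ^ 2 = a * M ^ 2] (mod p)" by (simp add: power_mult_distrib cong_mult)
    then show "QuadRes p (a * M ^ 2)" unfolding QuadRes_def by blast
  next
    assume "QuadRes p (a * M ^ 2)"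
    then obtain y where y: "[y ^ 2 = a * M ^ 2] (mod p)" unfolding QuadRes_def by blast
    obtain N where N: "[M * N = 1] (mod p)"
      using cong_solve_coprime_int \<open>coprime p M\<close> by (auto simp: coprime_commute)
    have "[(y * N) ^ 2 = a * (M * N) ^ 2] (mod p)"
      using cong_mult[OF y cong_refl[of "N ^ 2"]] by (simp add: power_mult_distrib mult_ac)
    also have "[a * (M * N) ^ 2 = a * 1 ^ 2] (mod p)" using N by (intro cong_mult cong_pow) auto
    finally show "QuadRes p a" unfolding QuadRes_def by auto
  qed
  ultimately show ?thesis unfolding Legendre_def by simp
qed

lemma odd_prime_square_not_dvd_fund_disc_mult_square:
  assumes "fund_disc d" "prime (p :: int)" "odd p" "\<not> p dvd M"
  shows "\<not> p ^ 2 dvd d * M ^ 2"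
proof
  assume "p ^ 2 dvd d * M ^ 2"
  moreover have "coprime (p ^ 2) (M ^ 2)" using assms(2,4) prime_imp_coprime by simp
  ultimately have "p ^ 2 dvd d" by (simp add: coprime_dvd_mult_left_iff)
  then show False using odd_prime_square_not_dvd_fund_disc assms(1-3) by blast
qed

lemma Legendre_power_cong:
  fixes p :: nat
  assumes "prime p" "odd p"
    and "fund_disc d" "\<not> int p dvd M" "D = d * int p ^ (2 * v) * M ^ 2"
    and "fund_disc d'" "\<not> int p dvd M'" "D' = d' * int p ^ (2 * v') * M' ^ 2"
    and "[D = D'] (mod int p ^ (2 * k))"
  shows "Legendre d (int p) ^ (k - v) = Legendre d' (int p) ^ (k - v')"
proof -
  define q where "q = int p ^ 2"
  have "q \<noteq> 0" using assms(1) by (simp add: q_def)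
  have nd: "\<not> q dvd d * M ^ 2" "\<not> q dvd d' * M' ^ 2"
    unfolding q_def using odd_prime_square_not_dvd_fund_disc_mult_square assms by auto
  have cong: "[q ^ v * (d * M ^ 2) = q ^ v' * (d' * M' ^ 2)] (mod q ^ k)"
    using assms(5,8,9) by (simp add: q_def mult_ac flip: power_mult)
  show ?thesis
  proof (cases "k \<le> v")
    case True
    then have "q ^ k dvd q ^ v' * (d' * M' ^ 2)"
      using cong_dvd_iff[OF cong] by (simp add: le_imp_power_dvd)
    then have "k \<le> v'" using power_dvd_power_mult_imp_le[OF \<open>q \<noteq> 0\<close> nd(2)] by blast
    with True show ?thesis by simp
  next
    case False
    then have "v = v'" "[d * M ^ 2 = d' * M' ^ 2] (mod q ^ (k - v))"
      using cong_power_mult_imp_eq[OF \<open>q \<noteq> 0\<close> nd cong] by auto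
    moreover have "int p dvd q ^ (k - v)"
    proof (rule dvd_trans)
      show "int p dvd q" by (simp add: q_def)
      show "q dvd q ^ (k - v)" using False by (intro dvd_power) auto
    qed
    ultimately have "[d * M ^ 2 = d' * M' ^ 2] (mod int p)" using cong_dvd_modulus by blast
    then have "Legendre (d * M ^ 2) (int p) = Legendre (d' * M' ^ 2) (int p)"
      by (rule Legendre_cong)
    then have "Legendre d (int p) = Legendre d' (int p)"
      using Legendre_mult_square assms(1,4,7) by simp
    then show ?thesis using \<open>v = v'\<close> by simp
  qed
qed

lemma fund_disc_mult_odd_square_2adic:
  assumes "fund_disc d" "odd M"
  obtains Y where "d * M ^ 2 = 4 ^ (if odd d then 0 else 1) * Y" "\<not> 4 dvd Y"
    "Y mod 4 = 1 \<longleftrightarrow> odd d" "odd d \<Longrightarrow> Y mod 8 = d mod 8"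
proof -
  have mod8: "(x * M ^ 2) mod 8 = x mod 8" for x
    using mod_mult_right_eq[of x "M ^ 2" 8] odd_square_mod_8[OF assms(2)] by simp
  have mod4: "(x * M ^ 2) mod 4 = x mod 4" for x
    using mod8[of x] mod_mod_cancel[of 4 8 "x * M ^ 2"] mod_mod_cancel[of 4 8 x] by simp
  from assms(1) show ?thesis
  proof (cases rule: fund_discE)
    case 1
    moreover have "odd d" using 1(1) by presburger
    ultimately show ?thesis using that[of "d * M ^ 2"] mod4 mod8 by (simp add: dvd_eq_mod_eq_0)
  next
    case (2 k)
    moreover have "even d" using 2(1) by simp
    ultimately show ?thesis using that[of "k * M ^ 2"] mod4 by (auto simp: dvd_eq_mod_eq_0)
  qed
qed

lemma kron_prime_2_power_cong:
  assumes "fund_disc d" "odd M" "D = d * 2 ^ (2 * v) * M ^ 2"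
    and "fund_disc d'" "odd M'" "D' = d' * 2 ^ (2 * v') * M' ^ 2"
    and "[D = D'] (mod 4 ^ (k + 1))"
  shows "kron_prime d 2 ^ (k - v) = kron_prime d' 2 ^ (k - v')"
proof -
  obtain Y where Y: "d * M ^ 2 = 4 ^ (if odd d then 0 else 1) * Y" "\<not> 4 dvd Y"
    "Y mod 4 = 1 \<longleftrightarrow> odd d" "odd d \<Longrightarrow> Y mod 8 = d mod 8"
    using fund_disc_mult_odd_square_2adic[OF assms(1,2)] by blast
  obtain Y' where Y': "d' * M' ^ 2 = 4 ^ (if odd d' then 0 else 1) * Y'" "\<not> 4 dvd Y'"
    "Y' mod 4 = 1 \<longleftrightarrow> odd d'" "odd d' \<Longrightarrow> Y' mod 8 = d' mod 8"
    using fund_disc_mult_odd_square_2adic[OF assms(4,5)] by blast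
  define w where "w = v + (if odd d then 0 else 1)"
  define w' where "w' = v' + (if odd d' then 0 else 1)"
  have four: "(2 :: int) ^ (2 * n) = 4 ^ n" for n by (simp add: power_mult)
  have "D = 4 ^ v * (d * M ^ 2)" "D' = 4 ^ v' * (d' * M' ^ 2)"
    unfolding assms(3,6) four by (simp_all add: mult_ac)
  then have "D = 4 ^ w * Y" "D' = 4 ^ w' * Y'"
    unfolding Y(1) Y'(1) w_def w'_def by (simp_all add: power_add)
  then have cong: "[4 ^ w * Y = 4 ^ w' * Y'] (mod 4 ^ (k + 1))" using assms(7) by simp
  show ?thesis
  proof (cases "k + 1 \<le> w")
    case True
    then have "4 ^ (k + 1) dvd (4 :: int) ^ w * Y" by (intro dvd_mult2 le_imp_power_dvd)
    then have "4 ^ (k + 1) dvd 4 ^ w' * Y'" using cong_dvd_iff[OF cong] by blast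
    then have "k + 1 \<le> w'" using power_dvd_power_mult_imp_le[OF _ Y'(2)] by simp
    with True show ?thesis by (simp add: w_def w'_def split: if_splits)
  next
    case False
    then have "w = w'" and Y_cong: "[Y = Y'] (mod 4 ^ (k + 1 - w))"
      using cong_power_mult_imp_eq[OF _ Y(2) Y'(2) cong] by auto
    have "[Y = Y'] (mod 4)"
      using Y_cong by (rule cong_dvd_modulus) (use False in simp)
    then have parity: "odd d \<longleftrightarrow> odd d'" using Y(3) Y'(3) by (simp add: cong_def)
    then have "v = v'" using \<open>w = w'\<close> by (simp add: w_def w'_def)
    show ?thesis
    proof (cases "odd d \<and> v < k")
      case True
      have "(8 :: int) dvd 4 ^ 2" by simp
      also have "4 ^ 2 dvd (4 :: int) ^ (k + 1 - w)"
        using True by (intro le_imp_power_dvd) (auto simp: w_def)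
      finally have "[Y = Y'] (mod 8)" using Y_cong by (rule cong_dvd_modulus[rotated])
      then have "d mod 8 = d' mod 8" using Y(4) Y'(4) True parity by (simp add: cong_def)
      then have "kron_prime d 2 = kron_prime d' 2" using True parity by (simp add: kron_prime_def)
      then show ?thesis using \<open>v = v'\<close> by simp
    next
      case False
      then have "k - v = 0 \<or> even d \<and> even d'" using parity by auto
      moreover have "0 < k - v" if "even d" using that \<open>\<not> k + 1 \<le> w\<close> by (simp add: w_def)
      ultimately show ?thesis using \<open>v = v'\<close> by (auto simp: kron_prime_def)
    qed
  qed
qed

lemma discriminant_prime_factorization:
  assumes "is_discriminant D" "D \<noteq> 0" "prime p"
  obtains d M v where "fund_disc d" "\<not> int p dvd M" "D = d * int p ^ (2 * v) * M ^ 2"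
    "\<And>k. psi D (p ^ k) = kron_prime d p ^ (k - v)"
proof -
  obtain d L where dL: "fund_disc d" "L > 0" "D = d * L ^ 2"
    using discriminant_fund_disc_factorization assms(1,2) by blast
  define v where "v = multiplicity p (nat L)"
  have "nat L \<noteq> 0" "\<not> is_unit p" using dL(2) assms(3) by (auto simp: not_prime_unit)
  then obtain y where y: "nat L = p ^ v * y" "\<not> p dvd y"
    using multiplicity_decompose'[of "nat L" p] unfolding v_def by blast
  have "L = int p ^ v * int y"
    using dL(2) y(1) by (metis nat_0_le less_imp_le of_nat_mult of_nat_power int_nat_eq)
  then have "D = d * int p ^ (2 * v) * int y ^ 2"
    using dL(3) by (simp add: power_mult_distrib power_mult mult_ac)
  then show ?thesis
    using that[of d "int y" v] dL(1) y(2) psi_prime_power[OF dL assms(3)] unfolding v_def by simp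
qed

lemma psi_prime_power_cong_nonzero:
  assumes "is_discriminant D" "is_discriminant D'" "D \<noteq> 0" "D' \<noteq> 0" "prime p"
    and "[D = D'] (mod 4 * int p ^ (2 * k))"
  shows "psi D (p ^ k) = psi D' (p ^ k)"
proof -
  obtain d M v where dMv: "fund_disc d" "\<not> int p dvd M" "D = d * int p ^ (2 * v) * M ^ 2"
    and psi_D: "\<And>k. psi D (p ^ k) = kron_prime d p ^ (k - v)"
    using discriminant_prime_factorization[OF assms(1,3,5)] by blast
  obtain d' M' v' where dMv': "fund_disc d'" "\<not> int p dvd M'" "D' = d' * int p ^ (2 * v') * M' ^ 2"
    and psi_D': "\<And>k. psi D' (p ^ k) = kron_prime d' p ^ (k - v')"
    using discriminant_prime_factorization[OF assms(2,4,5)] by blast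
  have "kron_prime d p ^ (k - v) = kron_prime d' p ^ (k - v')"
  proof (cases "p = 2")
    case True
    then have "[D = D'] (mod 4 ^ (k + 1))" using assms(6) by (simp add: power_mult)
    then show ?thesis using kron_prime_2_power_cong[of d M D v d' M' D' v' k] dMv dMv' True by simp
  next
    case False
    then have "odd p" using prime_odd_nat[OF assms(5)] prime_ge_2_nat[OF assms(5)] by simp
    have "[D = D'] (mod int p ^ (2 * k))" using assms(6) by (rule cong_dvd_modulus) simp
    then show ?thesis
      using Legendre_power_cong[OF assms(5) \<open>odd p\<close> dMv dMv'] False by (simp add: kron_prime_def)
  qed
  then show ?thesis using psi_D psi_D' by simp
qed

lemma psi_prime_power_cong:
  assumes "is_discriminant D" "is_discriminant D'" "prime p"
    and "[D = D'] (mod 4 * int p ^ (2 * k))"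
  shows "psi D (p ^ k) = psi D' (p ^ k)"
proof -
  define Z where "Z = 4 * int p ^ (2 * k)"
  have "Z \<noteq> 0" "is_discriminant Z" using assms(3) by (auto simp: Z_def is_discriminant_def)
  \<comment> \<open>the nonzero discriminant Z = (2 p^k)^2 \<equiv> 0 stands in for D = 0, where psi is 1\<close>
  have "psi Z (p ^ k) = 1"
  proof -
    have "fund_disc 1" by (simp add: fund_disc_def)
    moreover have "Z = 1 * (2 * int p ^ k) ^ 2"
      by (simp add: Z_def power_mult_distrib mult.commute flip: power_mult)
    moreover have "k \<le> multiplicity p (nat (2 * int p ^ k))"
      using assms(3) by (intro multiplicity_geI) (auto simp: nat_mult_distrib nat_power_eq)
    ultimately show ?thesis
      using psi_prime_power[of 1 "2 * int p ^ k" Z p k] assms(3) prime_gt_0_nat by simp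
  qed
  then have psi_0_mod_Z: "psi E (p ^ k) = 1" if "is_discriminant E" "[E = 0] (mod Z)" for E
    using psi_prime_power_cong_nonzero[OF that(1) \<open>is_discriminant Z\<close> _ \<open>Z \<noteq> 0\<close> assms(3)] that(2)
    by (cases "E = 0") (auto simp: cong_def Z_def)
  show ?thesis
  proof (cases "D = 0 \<or> D' = 0")
    case True
    then show ?thesis using psi_0_mod_Z assms(1,2,4) by (auto simp: Z_def cong_sym_eq)
  next
    case False
    then show ?thesis using psi_prime_power_cong_nonzero assms by blast
  qed
qed

lemma psi_cong:
  assumes "is_discriminant D" "is_discriminant D'" "m > 0" "[D = D'] (mod 4 * int m ^ 2)"
  shows "psi D m = psi D' m"
  unfolding psi_eq_prod_prime_powers[OF assms(1,3)] psi_eq_prod_prime_powers[OF assms(2,3)]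
proof (intro prod.cong refl psi_prime_power_cong[OF assms(1,2)])
  fix p assume p: "p \<in> prime_factors m"
  then show "prime p" by auto
  have "p ^ multiplicity p m dvd m" by (rule multiplicity_dvd)
  then have "int p ^ (2 * multiplicity p m) dvd int m ^ 2"
    by (metis dvd_power_same of_nat_dvd_iff of_nat_power power_mult mult.commute)
  then show "[D = D'] (mod 4 * int p ^ (2 * multiplicity p m))"
    using assms(4) cong_dvd_modulus mult_dvd_mono[OF dvd_refl] by blast
qed

lemma psi_square_minus_4_mult_mod:
  assumes "m > 0"
  shows "psi (t ^ 2 - 4 * l * int (n mod m ^ 2)) m = psi (t ^ 2 - 4 * l * int n) m"
proof (intro psi_cong is_discriminant_square_minus_4_mult assms)
  have "int n = int (n mod m ^ 2) + int m ^ 2 * int (n div m ^ 2)"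
    by (metis of_nat_add of_nat_mult of_nat_power mod_mult_div_eq)
  then have "(t ^ 2 - 4 * l * int (n mod m ^ 2)) - (t ^ 2 - 4 * l * int n)
      = 4 * int m ^ 2 * (l * int (n div m ^ 2))"
    by (simp add: algebra_simps)
  then show "[t ^ 2 - 4 * l * int (n mod m ^ 2) = t ^ 2 - 4 * l * int n] (mod 4 * int m ^ 2)"
    unfolding cong_iff_dvd_diff by simp
qed

lemma sum_coprime_residues_eq_sum_totatives:
  assumes "m > 0"
  shows "(\<Sum>n \<in> {n \<in> {0..<m}. coprime n m}. f n) = (\<Sum>n\<in>totatives m. f (n mod m))"
proof (rule sum.reindex_bij_witness[of _ "\<lambda>n. n mod m" "\<lambda>k. if k = 0 then m else k"])
  fix k assume k: "k \<in> {n \<in> {0..<m}. coprime n m}"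
  then show "(if k = 0 then m else k) mod m = k" by auto
  show "(if k = 0 then m else k) \<in> totatives m"
    using k assms by (auto simp: in_totatives_iff)
  show "f ((if k = 0 then m else k) mod m) = f k" using k by auto
next
  fix n assume n: "n \<in> totatives m"
  then have "0 < n" "n \<le> m" "coprime n m" by (auto simp: in_totatives_iff)
  then show "(if n mod m = 0 then m else n mod m) = n"
    by (cases "n = m") auto
  show "n mod m \<in> {n \<in> {0..<m}. coprime n m}"
    using assms \<open>coprime n m\<close> by simp
qed

lemma psi_tilde_eq_sum_totatives:
  assumes "m > 0"
  shows "psi_tilde l t m =
    (\<Sum>n\<in>totatives (m ^ 2). real_of_int (psi (t ^ 2 - 4 * int l * int n) m)) / totient (m ^ 2)"
proof -
  define F where "F n = real_of_int (psi (t ^ 2 - 4 * int l * int n) m)" for n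
  have "(\<Sum>n \<in> {n \<in> {0..<m ^ 2}. coprime n m}. F n) =
      (\<Sum>n \<in> {n \<in> {0..<m ^ 2}. coprime n (m ^ 2)}. F n)"
    by simp
  also have "\<dots> = (\<Sum>n\<in>totatives (m ^ 2). F (n mod m ^ 2))"
    using assms by (intro sum_coprime_residues_eq_sum_totatives) simp
  also have "\<dots> = (\<Sum>n\<in>totatives (m ^ 2). F n)"
    using psi_square_minus_4_mult_mod[OF assms] by (simp add: F_def)
  finally show ?thesis unfolding psi_tilde_def F_def by simp
qed

lemma psi_tilde_1: "psi_tilde l t 1 = 1"
  using psi_eq_prod_prime_powers[OF is_discriminant_square_minus_4_mult[of t 0 0], of 1]
  by (simp add: psi_tilde_def)

lemma psi_tilde_mult_coprime:
  assumes "a > 0" "b > 0" "coprime a b"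
  shows "psi_tilde l t (a * b) = psi_tilde l t a * psi_tilde l t b"
proof (cases "a = 1 \<or> b = 1")
  case True
  then show ?thesis using psi_tilde_1 by auto
next
  case False
  then have "a > 1" "b > 1" using assms by auto
  then have "a ^ 2 > 1" "b ^ 2 > 1" by (metis one_less_power zero_less_numeral)+
  moreover have "coprime (a ^ 2) (b ^ 2)" using assms(3) by simp
  ultimately have crt: "bij_betw (\<lambda>n. (n mod a ^ 2, n mod b ^ 2))
      (totatives (a ^ 2 * b ^ 2)) (totatives (a ^ 2) \<times> totatives (b ^ 2))"
    by (rule bij_betw_totatives)
  define F where "F m n = real_of_int (psi (t ^ 2 - 4 * int l * int n) m)" for m n
  have F_mod: "F m (n mod m ^ 2) = F m n" if "m > 0" for m n
    using psi_square_minus_4_mult_mod[OF that] by (simp add: F_def)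
  have "F (a * b) n = F a n * F b n" for n
    using psi_mult_coprime[OF is_discriminant_square_minus_4_mult assms] by (simp add: F_def)
  then have "(\<Sum>n\<in>totatives ((a * b) ^ 2). F (a * b) n)
      = (\<Sum>n\<in>totatives (a ^ 2 * b ^ 2). F a (n mod a ^ 2) * F b (n mod b ^ 2))"
    by (simp add: F_mod assms power_mult_distrib)
  also have "\<dots> = (\<Sum>(x, y)\<in>totatives (a ^ 2) \<times> totatives (b ^ 2). F a x * F b y)"
    using sum.reindex_bij_betw[OF crt, of "\<lambda>(x, y). F a x * F b y"] by simp
  also have "\<dots> = sum (F a) (totatives (a ^ 2)) * sum (F b) (totatives (b ^ 2))"
    by (simp add: sum_product sum.cartesian_product)
  finally show ?thesis
    using assms totient_mult_coprime[of "a ^ 2" "b ^ 2"]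
    by (simp add: psi_tilde_eq_sum_totatives F_def power_mult_distrib)
qed

theorem lemma3p1:
  fixes l :: nat and t :: int
  assumes "prime l" and "odd l"
  shows "psi_tilde l t 1 = 1 \<and>
         (\<forall>a b. a \<ge> 1 \<longrightarrow> b \<ge> 1 \<longrightarrow> coprime a b \<longrightarrow>
            psi_tilde l t (a * b) = psi_tilde l t a * psi_tilde l t b)"
  using psi_tilde_1 psi_tilde_mult_coprime by auto

end
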